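(* Let $d\ge2$, $n\ge2$ and let $v=v_1\cdots v_n\in\mathcal{L}(n,d)$. Consider the unfoldings of all billiard trajectories in $[0,1]^d$ which are coded by $v$ and start inside the cube $[0,1]^d$. Then for every $i$ with $2\le i\le n$, there is only one face of the tessellation that corresponds to the letter $v_i$, i.e. all these unfolded trajectories cross the same $(d-1)$-dimensional face of the tessellation at their $i$-th letter.
   Context: Billiard in the hypercube $[0,1]^d$, coded by $d$ letters: the two parallel $(d-1)$-faces orthogonal to the $i$-th coordinate axis get letter $i$; $\mathcal{L}(n,d)$ is the set of codes of length $n$ of billiard orbit segments. Unfolding: instead of reflecting a trajectory one reflects the cube, so the trajectory becomes a straight line in $\mathbb{R}^d$ tiled by the unit cubes $k+[0,1]^d$, $k\in\mathbb{Z}^d$, and each crossing of a $(d-1)$-face of this tessellation orthogonal to the $i$-th axis contributes the letter $i$. *)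

theory Defs
  imports Main "HOL.Real"
begin

text \<open>Points of R^d are functions nat => real; only coordinates 1..d are used.
  Letters of the code are the coordinate indices 1..d.\<close>

definition unfold :: "(nat \<Rightarrow> real) \<Rightarrow> (nat \<Rightarrow> real) \<Rightarrow> real \<Rightarrow> nat \<Rightarrow> real" where
  "unfold x w t = (\<lambda>j. x j + t * w j)"

definition hits :: "nat \<Rightarrow> (nat \<Rightarrow> real) \<Rightarrow> nat \<Rightarrow> bool" where
  "hits d p j \<longleftrightarrow> j \<in> {1..d} \<and> p j \<in> \<int>"

text \<open>The unfolded segment t in (0,T] of the line x + t w crosses faces of the tessellation
  exactly at the strictly increasing times ts, each crossing is through the relative
  interior of a (d-1)-face (only one coordinate is an integer), and the k-th crossing is
  orthogonal to axis v!k.  Hence v is the code of the segment.\<close>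
definition coded_segment ::
  "nat \<Rightarrow> (nat \<Rightarrow> real) \<Rightarrow> (nat \<Rightarrow> real) \<Rightarrow> real \<Rightarrow> real list \<Rightarrow> nat list \<Rightarrow> bool" where
  "coded_segment d x w T ts v \<longleftrightarrow>
     sorted_wrt (<) ts \<and> length ts = length v \<and>
     set ts = {t. 0 < t \<and> t \<le> T \<and> (\<exists>j. hits d (unfold x w t) j)} \<and>
     (\<forall>k < length ts. \<forall>j. hits d (unfold x w (ts ! k)) j \<longleftrightarrow> j = v ! k)"

definition billiard_language :: "nat \<Rightarrow> nat \<Rightarrow> nat list set" ("\<L>") where
  "\<L> n d = {v. length v = n \<and>
     (\<exists>x w T ts. (\<forall>j\<in>{1..d}. 0 \<le> x j \<and> x j \<le> 1) \<and> coded_segment d x w T ts v)}"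

definition tess_face :: "nat \<Rightarrow> nat \<Rightarrow> (nat \<Rightarrow> int) \<Rightarrow> (nat \<Rightarrow> real) set" where
  "tess_face d j m = {y. y j = of_int (m j) \<and>
     (\<forall>l\<in>{1..d}. l \<noteq> j \<longrightarrow> of_int (m l) \<le> y l \<and> y l \<le> of_int (m l) + 1)}"

end

theory Submission
  imports Defs
begin

text \<open>Along an unfolded trajectory that starts strictly inside the unit cube with positive
  direction, coordinate l increases from x_l \<in> (0,1), so the number of hyperplanes x_l \<in> \<int>
  crossed up to some time equals the integer part of the current x_l. At the k-th crossing this
  count is also the number of occurrences of l among v_1 \<dots> v_k. Hence the integer parts of
  the k-th crossing point, which determine the face crossed, depend on the code v alone.\<close>

lemma card_integer_times:
  fixes x w \<tau> :: real
  assumes "0 < x" "x < 1" "0 < w"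
  shows "card {t. 0 < t \<and> t \<le> \<tau> \<and> x + t * w \<in> \<int>} = nat \<lfloor>x + \<tau> * w\<rfloor>"
proof -
  let ?time = "\<lambda>z::int. (of_int z - x) / w"
  have "bij_betw ?time {1..\<lfloor>x + \<tau> * w\<rfloor>} {t. 0 < t \<and> t \<le> \<tau> \<and> x + t * w \<in> \<int>}"
  proof (rule bij_betw_imageI)
    show "inj_on ?time {1..\<lfloor>x + \<tau> * w\<rfloor>}"
      using assms(3) by (auto intro: inj_onI)
    show "?time ` {1..\<lfloor>x + \<tau> * w\<rfloor>} = {t. 0 < t \<and> t \<le> \<tau> \<and> x + t * w \<in> \<int>}"
    proof (intro equalityI subsetI)
      fix t assume "t \<in> ?time ` {1..\<lfloor>x + \<tau> * w\<rfloor>}"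
      then obtain z where z: "1 \<le> z" "z \<le> \<lfloor>x + \<tau> * w\<rfloor>" and t: "t = ?time z" by auto
      have zt: "x + t * w = of_int z" using t assms(3) by simp
      have "0 < t * w" using zt z(1) assms(2) by linarith
      then have "0 < t" using assms(3) by (simp add: zero_less_mult_iff)
      have "t * w \<le> \<tau> * w" using zt z(2) by (simp add: le_floor_iff)
      then have "t \<le> \<tau>" using assms(3) by simp
      show "t \<in> {t. 0 < t \<and> t \<le> \<tau> \<and> x + t * w \<in> \<int>}"
        using \<open>0 < t\<close> \<open>t \<le> \<tau>\<close> zt by auto
    next
      fix t assume "t \<in> {t. 0 < t \<and> t \<le> \<tau> \<and> x + t * w \<in> \<int>}"
      then obtain z where t: "0 < t" "t \<le> \<tau>" and z: "x + t * w = of_int z"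
        by (auto elim: Ints_cases)
      have "0 < x + t * w" using t assms by (simp add: add_pos_pos)
      then have "0 < z" using z by simp
      moreover have "of_int z \<le> x + \<tau> * w"
        using z t(2) assms(3) mult_right_mono[of t \<tau> w] by linarith
      moreover have "t = ?time z" using z assms(3) by (simp add: field_simps)
      ultimately show "t \<in> ?time ` {1..\<lfloor>x + \<tau> * w\<rfloor>}"
        by (intro image_eqI[of t _ z]) (auto simp: le_floor_iff)
    qed
  qed
  then show ?thesis by (simp flip: bij_betw_same_card)
qed

lemma coded_segment_card_letter:
  assumes cs: "coded_segment d x w T ts v" and i: "i < length ts" and l: "l \<in> {1..d}"
  shows "card {k. k \<le> i \<and> v ! k = l} = card {t. 0 < t \<and> t \<le> ts ! i \<and> x l + t * w l \<in> \<int>}"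
proof -
  have strict: "sorted_wrt (<) ts"
    and times: "set ts = {t. 0 < t \<and> t \<le> T \<and> (\<exists>j. hits d (unfold x w t) j)}"
    and letter: "\<And>k j. k < length ts \<Longrightarrow> hits d (unfold x w (ts ! k)) j \<longleftrightarrow> j = v ! k"
    using cs unfolding coded_segment_def by auto
  then have "sorted ts" and "distinct ts" by (simp_all add: strict_sorted_iff)
  have hits_l: "\<And>t. hits d (unfold x w t) l \<longleftrightarrow> x l + t * w l \<in> \<int>"
    using l by (simp add: hits_def unfold_def)
  have "bij_betw ((!) ts) {k. k \<le> i \<and> v ! k = l}
          {t. 0 < t \<and> t \<le> ts ! i \<and> x l + t * w l \<in> \<int>}"
  proof (rule bij_betw_imageI)
    show "inj_on ((!) ts) {k. k \<le> i \<and> v ! k = l}"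
      using i nth_eq_iff_index_eq[OF \<open>distinct ts\<close>] by (intro inj_onI) simp
    show "(!) ts ` {k. k \<le> i \<and> v ! k = l} = {t. 0 < t \<and> t \<le> ts ! i \<and> x l + t * w l \<in> \<int>}"
    proof (intro equalityI subsetI)
      fix t assume "t \<in> (!) ts ` {k. k \<le> i \<and> v ! k = l}"
      then obtain k where k: "k \<le> i" "v ! k = l" and t: "t = ts ! k" by auto
      have "k < length ts" using k(1) i by simp
      then have "t \<in> set ts" and "x l + t * w l \<in> \<int>" using t k(2) letter hits_l by auto
      moreover have "t \<le> ts ! i" using t k(1) i \<open>sorted ts\<close> by (simp add: sorted_nth_mono)
      ultimately show "t \<in> {t. 0 < t \<and> t \<le> ts ! i \<and> x l + t * w l \<in> \<int>}"
        using times by auto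
    next
      fix t assume t: "t \<in> {t. 0 < t \<and> t \<le> ts ! i \<and> x l + t * w l \<in> \<int>}"
      have "ts ! i \<le> T" using i times nth_mem by blast
      with t have "t \<in> set ts" unfolding times using hits_l by auto
      then obtain k where k: "k < length ts" and tk: "t = ts ! k" by (auto simp: in_set_conv_nth)
      have "hits d (unfold x w (ts ! k)) l" using tk t hits_l by simp
      then have "v ! k = l" using letter[OF k] by simp
      moreover have "k \<le> i"
      proof (rule ccontr)
        assume "\<not> k \<le> i"
        then have "ts ! i < ts ! k" using strict k by (simp add: sorted_wrt_nth_less)
        then show False using t tk by simp
      qed
      ultimately show "t \<in> (!) ts ` {k. k \<le> i \<and> v ! k = l}" using tk by blast
    qed
  qed
  then show ?thesis by (rule bij_betw_same_card)
qed

lemma mem_tess_face_floor: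
  assumes "y j \<in> \<int>" and "\<And>l. l \<in> insert j {1..d} \<Longrightarrow> m l = \<lfloor>y l\<rfloor>"
  shows "y \<in> tess_face d j m"
  using assms by (auto simp: tess_face_def elim!: Ints_cases)

lemma coded_segment_crossing_face:
  assumes x: "\<forall>j\<in>{1..d}. 0 < x j \<and> x j < 1" and w: "\<forall>j\<in>{1..d}. 0 < w j"
    and cs: "coded_segment d x w T ts v" and i: "i < length ts"
  shows "unfold x w (ts ! i) \<in> tess_face d (v ! i) (\<lambda>l. int (card {k. k \<le> i \<and> v ! k = l}))"
proof (rule mem_tess_face_floor)
  have "hits d (unfold x w (ts ! i)) (v ! i)"
    using cs i unfolding coded_segment_def by auto
  then have letter: "v ! i \<in> {1..d}" and "unfold x w (ts ! i) (v ! i) \<in> \<int>"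
    by (auto simp: hits_def)
  then show "unfold x w (ts ! i) (v ! i) \<in> \<int>" by blast
  have "0 < ts ! i" using cs i nth_mem unfolding coded_segment_def by blast
  have count: "int (card {k. k \<le> i \<and> v ! k = l}) = \<lfloor>unfold x w (ts ! i) l\<rfloor>"
    if "l \<in> {1..d}" for l
  proof -
    have "0 < x l + ts ! i * w l" using that x w \<open>0 < ts ! i\<close> by (simp add: add_pos_pos)
    then show ?thesis
      using that x w coded_segment_card_letter[OF cs i that] card_integer_times[of "x l" "w l"]
      by (simp add: unfold_def)
  qed
  show "int (card {k. k \<le> i \<and> v ! k = l}) = \<lfloor>unfold x w (ts ! i) l\<rfloor>"
    if "l \<in> insert (v ! i) {1..d}" for l
    using that letter count by auto
qed

text \<open>The face is determined by the letter counts of v_1 \<dots> v_i, so the conclusion holds at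
  every position.\<close>

theorem mainTheorem10:
  fixes d n :: nat and v :: "nat list"
  assumes "d \<ge> 2" and "n \<ge> 2" and "v \<in> \<L> n d"
  shows "\<forall>i\<in>{2..n}. \<exists>m :: nat \<Rightarrow> int.
           \<forall>x w T ts.
             (\<forall>j\<in>{1..d}. 0 < x j \<and> x j < 1) \<and> (\<forall>j\<in>{1..d}. 0 < w j) \<and>
             coded_segment d x w T ts v
             \<longrightarrow> unfold x w (ts ! (i - 1)) \<in> tess_face d (v ! (i - 1)) m"
proof
  fix i assume i: "i \<in> {2..n}"
  have "length v = n" using assms(3) by (simp add: billiard_language_def)
  then have "\<And>x w T ts. coded_segment d x w T ts v \<Longrightarrow> i - 1 < length ts"
    using i by (auto simp: coded_segment_def)
  then show "\<exists>m. \<forall>x w T ts.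
             (\<forall>j\<in>{1..d}. 0 < x j \<and> x j < 1) \<and> (\<forall>j\<in>{1..d}. 0 < w j) \<and>
             coded_segment d x w T ts v
             \<longrightarrow> unfold x w (ts ! (i - 1)) \<in> tess_face d (v ! (i - 1)) m"
    by (blast intro: coded_segment_crossing_face)
qed

end
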